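(* Let $\mathbb{G}$ be a finite set of labeled temporal graphs with common label alphabet $\Sigma$, each having at least one temporal wedge and none having a vertex with two incident temporal edges of equal time stamp. Let $W$ be the number of non-equivalent labeled temporal wedges, let $\lambda\in\mathbb{R}_{>0}$ and $\delta\in(0,1)$, and set $s=\left\lceil\frac{\log(2\cdot|\mathbb{G}|\cdot W/\delta)}{2(\lambda/W)^2}\right\rceil$. Run the sampling algorithm below independently with sample size $s$ on every $\mathcal{G}\in\mathbb{G}$, producing vectors $\widetilde{\phi}_{\mathrm{TG}}(\mathcal{G})$. Then, with probability at least $1-\delta$, $$\sup_{\mathcal{G}_1,\mathcal{G}_2\in\mathbb{G}}\left|k_{\mathrm{TG}}(\mathcal{G}_1,\mathcal{G}_2)-\langle\widetilde{\phi}_{\mathrm{TG}}(\mathcal{G}_1),\widetilde{\phi}_{\mathrm{TG}}(\mathcal{G}_2)\rangle\right|\le 3\lambda.$$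
   Context: A labeled temporal graph $\mathcal{G}=(V,\mathcal{E},l)$ has a finite node set $V$, a finite set $\mathcal{E}$ of directed temporal edges $(u,v,t)$ with $u\ne v\in V$, $t\in\mathbb{N}$, and a labeling $l\colon V\times\mathbb{N}\to\Sigma$. The degree $d(v)$ is the number of temporal edges incident to $v$ (incoming or outgoing). A temporal wedge centered at $v$ is an unordered pair $\{e,f\}$ of distinct temporal edges both incident to $v$; written in chronological order it is a sequence $g=((u_1,v_1,t_1),(u_2,v_2,t_2))$ with $t_1<t_2$. Its label is $l(g)=(l(u_1,t_1),l(v_1,t_1+1),l(u_2,t_2),l(v_2,t_2+1))$. Two such sequences $g=((u_i,v_i,t_i))_{i=1,2}$ and $g'=((u'_i,v'_i,t'_i))_{i=1,2}$ are equivalent if there is a bijection $\psi$ from the nodes of $g$ to those of $g'$ with $\psi(u_i)=u'_i$, $\psi(v_i)=v'_i$ for $i=1,2$, and $l(g)=l(g')$ (actual time stamps are ignored, only their order matters); $W$ is the number of equivalence classes (labeled wedge types). The total number of temporal wedges of $\mathcal{G}$ is $w=\sum_{v\in V}\binom{d(v)}{2}$. The normalized wedge feature vector $\phi_{\mathrm{TG}}(\mathcal{G})$ has one component per type $\tau$, equal to (number of temporal wedges of $\mathcal{G}$ of type $\tau$)$/w$, and the (normalized temporal graphlet wedge) kernel is $k_{\mathrm{TG}}(\mathcal{G}_1,\mathcal{G}_2)=\langle\phi_{\mathrm{TG}}(\mathcal{G}_1),\phi_{\mathrm{TG}}(\mathcal{G}_2)\rangle$. Sampling algorithm with sample size $s$: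 initialize $\widetilde{\phi}_{\mathrm{TG}}(\mathcal{G})$ to the zero vector; repeat $s$ times independently: sample a vertex $v$ with probability $p_v=\binom{d(v)}{2}/w$, then sample a pair $\{e,f\}$ of distinct edges incident to $v$ uniformly at random, let $\tau$ be the type of the temporal wedge $\{e,f\}$, and increase $\widetilde{\phi}_{\mathrm{TG}}(\mathcal{G})_\tau$ by $1/s$; output $\widetilde{\phi}_{\mathrm{TG}}(\mathcal{G})$. *)

theory Defs
  imports "HOL-Probability.Probability"
begin

type_synonym ('v, 'l) tgraph = "'v set \<times> ('v \<times> 'v \<times> nat) set \<times> ('v \<Rightarrow> nat \<Rightarrow> 'l)"

definition tg_nodes :: "('v, 'l) tgraph \<Rightarrow> 'v set" where
  "tg_nodes G = fst G"

definition tg_edges :: "('v, 'l) tgraph \<Rightarrow> ('v \<times> 'v \<times> nat) set" where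
  "tg_edges G = fst (snd G)"

definition tg_label :: "('v, 'l) tgraph \<Rightarrow> 'v \<Rightarrow> nat \<Rightarrow> 'l" where
  "tg_label G = snd (snd G)"

definition edge_time :: "'v \<times> 'v \<times> nat \<Rightarrow> nat" where
  "edge_time e = snd (snd e)"

definition tgraph_wf :: "'l set \<Rightarrow> ('v, 'l) tgraph \<Rightarrow> bool" where
  "tgraph_wf Sig G \<longleftrightarrow> finite (tg_nodes G) \<and> finite (tg_edges G) \<and>
     (\<forall>(u, v, t) \<in> tg_edges G. u \<in> tg_nodes G \<and> v \<in> tg_nodes G \<and> u \<noteq> v) \<and>
     (\<forall>v \<in> tg_nodes G. \<forall>t. tg_label G v t \<in> Sig)"

definition incident :: "('v, 'l) tgraph \<Rightarrow> 'v \<Rightarrow> ('v \<times> 'v \<times> nat) set" where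
  "incident G v = {e \<in> tg_edges G. fst e = v \<or> fst (snd e) = v}"

definition tdeg :: "('v, 'l) tgraph \<Rightarrow> 'v \<Rightarrow> nat" where
  "tdeg G v = card (incident G v)"

definition wedges_at :: "('v, 'l) tgraph \<Rightarrow> 'v \<Rightarrow> ('v \<times> 'v \<times> nat) set set" where
  "wedges_at G v = {{e, f} | e f. e \<noteq> f \<and> e \<in> incident G v \<and> f \<in> incident G v}"

definition total_wedges :: "('v, 'l) tgraph \<Rightarrow> nat" where
  "total_wedges G = (\<Sum>v \<in> tg_nodes G. tdeg G v choose 2)"

definition distinct_times :: "('v, 'l) tgraph \<Rightarrow> bool" where
  "distinct_times G \<longleftrightarrow> (\<forall>v \<in> tg_nodes G. \<forall>e \<in> incident G v. \<forall>f \<in> incident G v.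
       e \<noteq> f \<longrightarrow> edge_time e \<noteq> edge_time f)"

definition chrono :: "('v \<times> 'v \<times> nat) set \<Rightarrow> ('v \<times> 'v \<times> nat) \<times> ('v \<times> 'v \<times> nat)" where
  "chrono P = (SOME (e, f). P = {e, f} \<and> edge_time e < edge_time f)"

definition chrono_wedge_seq :: "('v \<times> 'v \<times> nat) \<times> ('v \<times> 'v \<times> nat) \<Rightarrow> bool" where
  "chrono_wedge_seq g = (case g of ((u1, v1, t1), (u2, v2, t2)) \<Rightarrow>
     u1 \<noteq> v1 \<and> u2 \<noteq> v2 \<and> t1 < t2 \<and> {u1, v1} \<inter> {u2, v2} \<noteq> {})"

text \<open>Node-identity pattern of a list of nodes: each node is replaced by the index of
  its first occurrence among the distinct nodes.  Two lists admit a bijection psi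
  mapping one onto the other positionwise iff their patterns coincide.\<close>
definition node_pattern :: "'v list \<Rightarrow> nat list" where
  "node_pattern xs = map (\<lambda>x. length (takeWhile (\<lambda>y. y \<noteq> x) (remdups xs))) xs"

text \<open>Canonical invariant of the equivalence class (labeled wedge type) of a
  chronological wedge sequence g under labeling l: node pattern and label l(g).\<close>
definition wedge_key :: "('v \<Rightarrow> nat \<Rightarrow> 'l) \<Rightarrow> ('v \<times> 'v \<times> nat) \<times> ('v \<times> 'v \<times> nat)
    \<Rightarrow> nat list \<times> 'l list" where
  "wedge_key l g = (case g of ((u1, v1, t1), (u2, v2, t2)) \<Rightarrow>
     (node_pattern [u1, v1, u2, v2], [l u1 t1, l v1 (t1 + 1), l u2 t2, l v2 (t2 + 1)]))"

definition wedge_types :: "'l set \<Rightarrow> (nat list \<times> 'l list) set" where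
  "wedge_types Sig = {wedge_key l g | (l :: nat \<Rightarrow> nat \<Rightarrow> 'l) g.
      (\<forall>x t. l x t \<in> Sig) \<and> chrono_wedge_seq g}"

definition num_types :: "'l set \<Rightarrow> nat" where
  "num_types Sig = card (wedge_types Sig)"

definition wtype :: "('v, 'l) tgraph \<Rightarrow> ('v \<times> 'v \<times> nat) set \<Rightarrow> nat list \<times> 'l list" where
  "wtype G P = wedge_key (tg_label G) (chrono P)"

definition type_count :: "('v, 'l) tgraph \<Rightarrow> nat list \<times> 'l list \<Rightarrow> nat" where
  "type_count G \<tau> = card {(v, P). v \<in> tg_nodes G \<and> P \<in> wedges_at G v \<and> wtype G P = \<tau>}"

definition phi_TG :: "('v, 'l) tgraph \<Rightarrow> nat list \<times> 'l list \<Rightarrow> real" where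
  "phi_TG G \<tau> = real (type_count G \<tau>) / real (total_wedges G)"

definition inner_types :: "'l set \<Rightarrow> (nat list \<times> 'l list \<Rightarrow> real) \<Rightarrow> (nat list \<times> 'l list \<Rightarrow> real) \<Rightarrow> real" where
  "inner_types Sig x y = (\<Sum>\<tau> \<in> wedge_types Sig. x \<tau> * y \<tau>)"

definition k_TG :: "'l set \<Rightarrow> ('v, 'l) tgraph \<Rightarrow> ('v, 'l) tgraph \<Rightarrow> real" where
  "k_TG Sig G1 G2 = inner_types Sig (phi_TG G1) (phi_TG G2)"

definition vertex_pmf :: "('v, 'l) tgraph \<Rightarrow> 'v pmf" where
  "vertex_pmf G = embed_pmf (\<lambda>v. if v \<in> tg_nodes G
      then real (tdeg G v choose 2) / real (total_wedges G) else 0)"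

definition sample_type :: "('v, 'l) tgraph \<Rightarrow> (nat list \<times> 'l list) pmf" where
  "sample_type G = do {
     v \<leftarrow> vertex_pmf G;
     P \<leftarrow> pmf_of_set (wedges_at G v);
     return_pmf (wtype G P) }"

definition estimate_pmf :: "('v, 'l) tgraph \<Rightarrow> nat \<Rightarrow> (nat list \<times> 'l list \<Rightarrow> real) pmf" where
  "estimate_pmf G s = map_pmf (\<lambda>X \<tau>. real (card {i \<in> {..<s}. X i = \<tau>}) / real s)
      (Pi_pmf {..<s} undefined (\<lambda>_. sample_type G))"

definition joint_estimate_pmf :: "('v, 'l) tgraph set \<Rightarrow> nat
    \<Rightarrow> (('v, 'l) tgraph \<Rightarrow> nat list \<times> 'l list \<Rightarrow> real) pmf" where
  "joint_estimate_pmf GG s = Pi_pmf GG (\<lambda>_. 0) (\<lambda>G. estimate_pmf G s)"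

end

(*
  Sampling a vertex with probability binom(d(v),2)/w and then one of its binom(d(v),2)
  wedges uniformly picks every temporal wedge with probability 1/w, so each sample has
  type tau with probability exactly phi_TG(G)_tau.  An estimated coordinate is thus
  Binomial(s, phi_TG(G)_tau)/s, and Hoeffding's inequality bounds the probability that
  it deviates by at least lambda/W by 2 exp(-2 s (lambda/W)^2), which the choice of s
  makes at most delta/(|GG| W).  A union bound over the |GG| W pairs (graph, type)
  leaves probability at least 1 - delta that all coordinates are that close.  Since true
  and estimated coordinates lie in [0,1], each of the W products in the inner product is
  then off by at most 2 lambda/W, so the kernel error is at most 2 lambda.
*)

theory Submission
  imports Defs
begin

lemma abs_mult_diff_le:
  fixes a b c d e :: real
  assumes "a \<in> {0..1}" "d \<in> {0..1}" "\<bar>a - c\<bar> \<le> e" "\<bar>b - d\<bar> \<le> e"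
  shows "\<bar>a * b - c * d\<bar> \<le> 2 * e"
proof -
  have "\<bar>a * (b - d)\<bar> \<le> \<bar>b - d\<bar>"
    using assms by (simp add: abs_mult mult_left_le_one_le)
  moreover have "\<bar>(a - c) * d\<bar> \<le> \<bar>a - c\<bar>"
    using assms by (simp add: abs_mult mult_right_le_one_le)
  moreover have "a * b - c * d = a * (b - d) + (a - c) * d"
    by (simp add: algebra_simps)
  ultimately show ?thesis
    using assms abs_triangle_ineq[of "a * (b - d)" "(a - c) * d"] by linarith
qed

lemma abs_sum_mult_diff_le:
  fixes x y x' y' :: "'a \<Rightarrow> real"
  assumes "\<And>\<tau>. \<tau> \<in> T \<Longrightarrow>
    x \<tau> \<in> {0..1} \<and> y' \<tau> \<in> {0..1} \<and> \<bar>x \<tau> - x' \<tau>\<bar> \<le> e \<and> \<bar>y \<tau> - y' \<tau>\<bar> \<le> e"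
  shows "\<bar>(\<Sum>\<tau>\<in>T. x \<tau> * y \<tau>) - (\<Sum>\<tau>\<in>T. x' \<tau> * y' \<tau>)\<bar> \<le> 2 * e * card T"
proof -
  have "\<bar>(\<Sum>\<tau>\<in>T. x \<tau> * y \<tau>) - (\<Sum>\<tau>\<in>T. x' \<tau> * y' \<tau>)\<bar>
      \<le> (\<Sum>\<tau>\<in>T. \<bar>x \<tau> * y \<tau> - x' \<tau> * y' \<tau>\<bar>)"
    by (simp add: sum_subtractf[symmetric] sum_abs)
  also have "\<dots> \<le> (\<Sum>\<tau>\<in>T. 2 * e)"
    using assms by (intro sum_mono abs_mult_diff_le) auto
  finally show ?thesis by (simp add: mult.commute)
qed

lemma prob_all_ge_union_bound:
  fixes q :: real
  assumes "finite I" "\<And>i. i \<in> I \<Longrightarrow> measure_pmf.prob M {x. \<not> P i x} \<le> q"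
  shows "measure_pmf.prob M {x. \<forall>i\<in>I. P i x} \<ge> 1 - card I * q"
proof -
  have "measure_pmf.prob M (\<Union>i\<in>I. {x. \<not> P i x}) \<le> (\<Sum>i\<in>I. measure_pmf.prob M {x. \<not> P i x})"
    using assms(1) by (rule measure_pmf.finite_measure_subadditive_finite) auto
  also have "\<dots> \<le> card I * q"
    using sum_mono[of I _ "\<lambda>_. q"] assms(2) by simp
  moreover have "{x. \<forall>i\<in>I. P i x} = UNIV - (\<Union>i\<in>I. {x. \<not> P i x})"
    by auto
  ultimately show ?thesis
    using measure_pmf.prob_compl[of "\<Union>i\<in>I. {x. \<not> P i x}" M] by simp
qed

lemma hoeffding_sample_size:
  fixes N e delta :: real
  assumes "N \<ge> 1" "e > 0" "0 < delta" "delta < 1"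
    and s: "s = nat \<lceil>ln (2 * N / delta) / (2 * e\<^sup>2)\<rceil>"
  shows "s > 0" and "N * (2 * exp (-2 * real s * e\<^sup>2)) \<le> delta"
proof -
  define L where "L = ln (2 * N / delta)"
  have "2 * N / delta > 1"
    using assms by (simp add: less_divide_eq)
  then have "L > 0" unfolding L_def by simp
  have s_ge: "real s \<ge> L / (2 * e\<^sup>2)"
    unfolding s L_def by linarith
  moreover have "L / (2 * e\<^sup>2) > 0"
    using \<open>L > 0\<close> \<open>e > 0\<close> by simp
  ultimately show "s > 0" by linarith
  have "L \<le> 2 * real s * e\<^sup>2"
    using s_ge \<open>e > 0\<close> by (simp add: field_simps)
  then have "exp (-2 * real s * e\<^sup>2) \<le> exp (- L)" by simp
  also have "exp (- L) = delta / (2 * N)"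
    unfolding L_def using assms by (simp add: exp_minus)
  finally show "N * (2 * exp (-2 * real s * e\<^sup>2)) \<le> delta"
    using assms by (simp add: field_simps)
qed

lemma map_pmf_eq_bernoulli_pmf: "map_pmf (\<lambda>x. x = a) M = bernoulli_pmf (pmf M a)"
proof (rule pmf_eqI)
  fix b :: bool
  have "(\<lambda>x. x = a) -` {True} = {a}" "(\<lambda>x. x = a) -` {False} = UNIV - {a}"
    by auto
  moreover have "measure_pmf.prob M (UNIV - {a}) = 1 - pmf M a"
    using measure_pmf.prob_compl[of "{a}" M] by (simp add: measure_pmf_single)
  ultimately show "pmf (map_pmf (\<lambda>x. x = a) M) b = pmf (bernoulli_pmf (pmf M a)) b"
    by (cases b) (simp_all add: pmf_map measure_pmf_single pmf_le_1)
qed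

lemma map_pmf_count_Pi_pmf_eq_binomial_pmf:
  "map_pmf (\<lambda>X. card {i \<in> {..<s}. X i = a}) (Pi_pmf {..<s} dflt (\<lambda>_. M))
     = binomial_pmf s (pmf M a)"
proof -
  have "binomial_pmf s (pmf M a) = map_pmf (\<lambda>f. card {x\<in>{..<s}. f x})
      (Pi_pmf {..<s} (dflt = a) (\<lambda>_. bernoulli_pmf (pmf M a)))"
    by (rule binomial_pmf_altdef') (auto simp: pmf_le_1)
  also have "Pi_pmf {..<s} (dflt = a) (\<lambda>_. bernoulli_pmf (pmf M a))
      = map_pmf (\<lambda>X. (\<lambda>x. x = a) \<circ> X) (Pi_pmf {..<s} dflt (\<lambda>_. M))"
    by (simp add: Pi_pmf_map flip: map_pmf_eq_bernoulli_pmf)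
  finally show ?thesis
    by (simp add: pmf.map_comp o_def)
qed

lemma wedges_at_eq_card_2_subsets: "wedges_at G v = {B. B \<subseteq> incident G v \<and> card B = 2}"
proof (intro set_eqI iffI)
  fix B assume "B \<in> {B. B \<subseteq> incident G v \<and> card B = 2}"
  then obtain e f where "B = {e, f}" "e \<noteq> f" "B \<subseteq> incident G v"
    by (auto simp: card_2_iff)
  then show "B \<in> wedges_at G v"
    unfolding wedges_at_def by blast
qed (auto simp: wedges_at_def)

lemma finite_incident: "tgraph_wf Sig G \<Longrightarrow> finite (incident G v)"
  unfolding tgraph_wf_def incident_def by auto

lemma finite_wedges_at: "tgraph_wf Sig G \<Longrightarrow> finite (wedges_at G v)"
  unfolding wedges_at_eq_card_2_subsets using finite_incident[of Sig G v] by auto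

lemma card_wedges_at: "tgraph_wf Sig G \<Longrightarrow> card (wedges_at G v) = tdeg G v choose 2"
  unfolding wedges_at_eq_card_2_subsets tdeg_def by (rule n_subsets[OF finite_incident])

lemma pmf_vertex_pmf:
  assumes "tgraph_wf Sig G" "total_wedges G > 0"
  shows "pmf (vertex_pmf G) v =
    (if v \<in> tg_nodes G then real (tdeg G v choose 2) / real (total_wedges G) else 0)"
  unfolding vertex_pmf_def
proof (rule pmf_embed_pmf)
  have "finite (tg_nodes G)"
    using assms(1) unfolding tgraph_wf_def by simp
  moreover have "(\<Sum>v\<in>tg_nodes G. real (tdeg G v choose 2) / real (total_wedges G)) = 1"
    using assms(2) by (simp add: total_wedges_def flip: sum_divide_distrib of_nat_sum)
  ultimately show "(\<integral>\<^sup>+v. ennreal (if v \<in> tg_nodes G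
      then real (tdeg G v choose 2) / real (total_wedges G) else 0) \<partial>count_space UNIV) = 1"
    by (subst nn_integral_count_space'[of "tg_nodes G"]) (auto simp: sum_ennreal)
qed simp

lemma type_count_eq_sum:
  assumes "tgraph_wf Sig G"
  shows "type_count G \<tau> = (\<Sum>v\<in>tg_nodes G. card {P \<in> wedges_at G v. wtype G P = \<tau>})"
proof -
  have "{(v, P). v \<in> tg_nodes G \<and> P \<in> wedges_at G v \<and> wtype G P = \<tau>}
      = (SIGMA v:tg_nodes G. {P \<in> wedges_at G v. wtype G P = \<tau>})"
    by auto
  moreover have "finite (tg_nodes G)"
    using assms unfolding tgraph_wf_def by simp
  ultimately show ?thesis
    unfolding type_count_def using finite_wedges_at[OF assms] by (simp add: card_SigmaI)
qed

lemma pmf_sample_type: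
  assumes wf: "tgraph_wf Sig G" and pos: "total_wedges G > 0"
  shows "pmf (sample_type G) \<tau> = phi_TG G \<tau>"
proof -
  define c where "c v = real (card {P \<in> wedges_at G v. wtype G P = \<tau>})" for v
  have fin: "finite (tg_nodes G)"
    using wf unfolding tgraph_wf_def by simp
  have vertex_step: "pmf (vertex_pmf G) v * pmf (map_pmf (wtype G) (pmf_of_set (wedges_at G v))) \<tau>
      = c v / real (total_wedges G)" if "v \<in> tg_nodes G" for v
  proof (cases "wedges_at G v = {}")
    case True
    then show ?thesis
      using that card_wedges_at[OF wf, of v] by (simp add: pmf_vertex_pmf[OF wf pos] c_def)
  next
    case False
    then have "pmf (map_pmf (wtype G) (pmf_of_set (wedges_at G v))) \<tau>
        = c v / real (tdeg G v choose 2)"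
      using finite_wedges_at[OF wf, of v] card_wedges_at[OF wf, of v]
      by (simp add: pmf_map measure_pmf_of_set c_def Int_def vimage_def conj_commute)
    moreover have "tdeg G v choose 2 \<noteq> 0"
      using False card_wedges_at[OF wf, of v] finite_wedges_at[OF wf, of v] by (metis card_0_eq)
    ultimately show ?thesis
      using that by (simp add: pmf_vertex_pmf[OF wf pos])
  qed
  have sample: "sample_type G = vertex_pmf G \<bind> (\<lambda>v. map_pmf (wtype G) (pmf_of_set (wedges_at G v)))"
    unfolding sample_type_def map_pmf_def by simp
  have "pmf (sample_type G) \<tau>
      = (\<Sum>v\<in>tg_nodes G. pmf (vertex_pmf G) v * pmf (map_pmf (wtype G) (pmf_of_set (wedges_at G v))) \<tau>)"
    unfolding sample pmf_bind
    by (subst integral_measure_pmf[OF fin])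
      (auto simp: pmf_vertex_pmf[OF wf pos] set_pmf_eq split: if_splits)
  also have "\<dots> = (\<Sum>v\<in>tg_nodes G. c v) / real (total_wedges G)"
    by (simp add: vertex_step sum_divide_distrib)
  also have "(\<Sum>v\<in>tg_nodes G. c v) = real (type_count G \<tau>)"
    by (simp add: type_count_eq_sum[OF wf] c_def)
  finally show ?thesis
    unfolding phi_TG_def .
qed

lemma estimate_pmf_deviation:
  assumes "s > 0" "\<epsilon> \<ge> 0"
  shows "measure_pmf.prob (estimate_pmf G s) {\<phi>. \<epsilon> \<le> \<bar>\<phi> a - pmf (sample_type G) a\<bar>}
     \<le> 2 * exp (-2 * real s * \<epsilon>\<^sup>2)"
proof -
  let ?p = "pmf (sample_type G) a"
  have "binomial_distribution ?p"
    by unfold_locales (auto simp: pmf_le_1)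
  have "measure_pmf.prob (estimate_pmf G s) {\<phi>. \<epsilon> \<le> \<bar>\<phi> a - ?p\<bar>}
     = measure_pmf.prob (map_pmf (\<lambda>X. card {i \<in> {..<s}. X i = a})
         (Pi_pmf {..<s} undefined (\<lambda>_. sample_type G))) {k. \<epsilon> \<le> \<bar>real k / real s - ?p\<bar>}"
    unfolding estimate_pmf_def by (simp add: vimage_def)
  also have "\<dots> = measure_pmf.prob (binomial_pmf s ?p) {k. \<epsilon> \<le> \<bar>real k / real s - ?p\<bar>}"
    unfolding map_pmf_count_Pi_pmf_eq_binomial_pmf ..
  also have "\<dots> \<le> 2 * exp (-2 * real s * \<epsilon>\<^sup>2)"
    using binomial_distribution.prob_abs_ge'[OF \<open>binomial_distribution ?p\<close> assms] by simp
  finally show ?thesis .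
qed

lemma estimate_pmf_range:
  assumes "\<phi> \<in> set_pmf (estimate_pmf G s)"
  shows "\<phi> \<tau> \<in> {0..1}"
proof -
  obtain X where "\<phi> = (\<lambda>\<tau>. real (card {i \<in> {..<s}. X i = \<tau>}) / real s)"
    using assms unfolding estimate_pmf_def by auto
  moreover have "card {i \<in> {..<s}. X i = \<tau>} \<le> s"
    using card_mono[of "{..<s}" "{i \<in> {..<s}. X i = \<tau>}"] by auto
  ultimately show ?thesis by (auto simp: divide_le_eq_1)
qed

lemma set_joint_estimate_pmf:
  assumes "finite GG" "\<Phi> \<in> set_pmf (joint_estimate_pmf GG s)" "G \<in> GG"
  shows "\<Phi> G \<in> set_pmf (estimate_pmf G s)"
  using assms unfolding joint_estimate_pmf_def set_Pi_pmf[OF assms(1)] PiE_dflt_def comp_def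
  by blast

lemma prob_joint_estimate_pmf_component:
  assumes "finite GG" "G \<in> GG"
  shows "measure_pmf.prob (joint_estimate_pmf GG s) {\<Phi>. P (\<Phi> G)}
       = measure_pmf.prob (estimate_pmf G s) {\<phi>. P \<phi>}"
proof -
  have "map_pmf (\<lambda>\<Phi>. \<Phi> G) (joint_estimate_pmf GG s) = estimate_pmf G s"
    unfolding joint_estimate_pmf_def using assms by (simp add: Pi_pmf_component)
  then show ?thesis
    by (metis measure_map_pmf vimage_Collect_eq)
qed

lemma prob_joint_estimate_deviation:
  assumes "finite GG" "G \<in> GG" "tgraph_wf Sig G" "total_wedges G > 0" "s > 0" "e \<ge> 0"
  shows "measure_pmf.prob (joint_estimate_pmf GG s) {\<Phi>. e \<le> \<bar>\<Phi> G \<tau> - phi_TG G \<tau>\<bar>}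
     \<le> 2 * exp (-2 * real s * e\<^sup>2)"
  using prob_joint_estimate_pmf_component[OF assms(1,2), of s "\<lambda>\<phi>. e \<le> \<bar>\<phi> \<tau> - phi_TG G \<tau>\<bar>"]
    estimate_pmf_deviation[OF assms(5,6), of G \<tau>]
  by (simp add: pmf_sample_type[OF assms(3,4)])

lemma abs_k_TG_diff_le:
  assumes "finite GG" "\<Phi> \<in> set_pmf (joint_estimate_pmf GG s)"
    and "\<forall>G \<in> GG. tgraph_wf Sig G \<and> total_wedges G > 0"
    and "\<forall>G \<in> GG. \<forall>\<tau> \<in> wedge_types Sig. \<bar>\<Phi> G \<tau> - phi_TG G \<tau>\<bar> \<le> e"
    and "G1 \<in> GG" "G2 \<in> GG"
  shows "\<bar>k_TG Sig G1 G2 - inner_types Sig (\<Phi> G1) (\<Phi> G2)\<bar> \<le> 2 * e * num_types Sig"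
  unfolding k_TG_def inner_types_def num_types_def
  using assms
  by (intro abs_sum_mult_diff_le)
    (fastforce simp: abs_minus_commute pmf_le_1 pmf_sample_type[symmetric]
      intro: estimate_pmf_range set_joint_estimate_pmf[OF assms(1)])

theorem theorem2:
  fixes GG :: "('v, 'l) tgraph set" and Sig :: "'l set"
    and lam delta :: real and s :: nat
  assumes "finite GG" and "finite Sig"
    and "\<forall>G \<in> GG. tgraph_wf Sig G \<and> total_wedges G > 0 \<and> distinct_times G"
    and "lam > 0" and "0 < delta" and "delta < 1"
    and "s = nat \<lceil>ln (2 * real (card GG) * real (num_types Sig) / delta)
                   / (2 * (lam / real (num_types Sig))^2)\<rceil>"
  shows "measure_pmf.prob (joint_estimate_pmf GG s)
           {Phi. \<forall>G1 \<in> GG. \<forall>G2 \<in> GG.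
              \<bar>k_TG Sig G1 G2 - inner_types Sig (Phi G1) (Phi G2)\<bar> \<le> 3 * lam}
         \<ge> 1 - delta"
proof (cases "num_types Sig = 0 \<or> GG = {}")
  case True
  have "inner_types Sig x y = 0" if "num_types Sig = 0" for x y
    using that unfolding num_types_def inner_types_def by (auto simp: card_eq_0_iff)
  with True assms(4-6) show ?thesis
    by (auto simp: k_TG_def)
next
  case False
  let ?T = "wedge_types Sig" and ?J = "joint_estimate_pmf GG s"
  define e where "e = lam / num_types Sig"
  have finT: "finite ?T" and "e > 0"
    using False assms(4) card_ge_0_finite unfolding e_def num_types_def by auto
  have "card (GG \<times> ?T) \<ge> 1"
    using False assms(1) finT by (simp add: num_types_def Suc_le_eq card_gt_0_iff)
  moreover have "s = nat \<lceil>ln (2 * real (card (GG \<times> ?T)) / delta) / (2 * e\<^sup>2)\<rceil>"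
    using assms(7) finT by (simp add: e_def num_types_def card_cartesian_product mult.assoc)
  ultimately have "s > 0" and sample_size: "card (GG \<times> ?T) * (2 * exp (-2 * real s * e\<^sup>2)) \<le> delta"
    using hoeffding_sample_size[OF _ \<open>e > 0\<close> assms(5,6)] by simp_all
  have "1 - delta \<le> measure_pmf.prob ?J {Phi. \<forall>(G, \<tau>) \<in> GG \<times> ?T. \<bar>Phi G \<tau> - phi_TG G \<tau>\<bar> < e}"
    using prob_all_ge_union_bound[where P = "\<lambda>(G, \<tau>) Phi. \<bar>Phi G \<tau> - phi_TG G \<tau>\<bar> < e"
        and I = "GG \<times> ?T" and M = ?J] sample_size assms(1,3) finT \<open>s > 0\<close> \<open>e > 0\<close>
    by (fastforce simp: not_less intro: prob_joint_estimate_deviation)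
  also have "\<dots> \<le> measure_pmf.prob ?J
      {Phi. \<forall>G1 \<in> GG. \<forall>G2 \<in> GG.
         \<bar>k_TG Sig G1 G2 - inner_types Sig (Phi G1) (Phi G2)\<bar> \<le> 3 * lam}"
  proof (rule measure_pmf.finite_measure_mono_AE, unfold AE_measure_pmf_iff, safe)
    fix Phi G1 G2
    assume "Phi \<in> set_pmf ?J" "\<forall>(G, \<tau>) \<in> GG \<times> ?T. \<bar>Phi G \<tau> - phi_TG G \<tau>\<bar> < e"
      and "G1 \<in> GG" "G2 \<in> GG"
    then have "\<bar>k_TG Sig G1 G2 - inner_types Sig (Phi G1) (Phi G2)\<bar> \<le> 2 * e * num_types Sig"
      using assms(1,3) by (intro abs_k_TG_diff_le) (auto intro: less_imp_le)
    also have "\<dots> \<le> 3 * lam"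
      using False assms(4) by (simp add: e_def)
    finally show "\<bar>k_TG Sig G1 G2 - inner_types Sig (Phi G1) (Phi G2)\<bar> \<le> 3 * lam" .
  qed simp
  finally show ?thesis .
qed

end
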